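(* Let $0<q<1$. Then \[ \frac{(1+q)q^{3}}{(1-q)^{5}(1-q^{3})^{3}}-\sum_{n=1}^{\infty}\frac{(1+q^{2n+1})\,q^{7n}}{(1-q^{2n-1})^{3}(1-q^{2n+1})^{2}(1-q^{2n+3})^{3}} =\frac{\pi_{q}^{2}(1+q+q^{2})(1+q+q^{2}+q^{3}+q^{4})\,q^{5/2}}{(1+q^{2})^{3}(1-q^{2})^{8}}. \]
   Context: Let $0<q<1$. With $(z;q)_\infty=\prod_{k\ge0}(1-zq^k)$, Gosper's $q$-pi is $\pi_q=(1-q^2)q^{1/4}\frac{(q^2;q^2)_\infty^2}{(q;q^2)_\infty^2}$. *)

theory Defs
  imports "HOL-Analysis.Analysis"
begin

definition qpoch_inf :: "real \<Rightarrow> real \<Rightarrow> real" where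
  "qpoch_inf z q = (\<Prod>k. (1 - z * q ^ k))"

definition gosper_pi_q :: "real \<Rightarrow> real" where
  "gosper_pi_q q = (1 - q^2) * q powr (1/4) *
     (qpoch_inf (q^2) (q^2))^2 / (qpoch_inf q (q^2))^2"

end

theory Submission
  imports Defs
begin

text \<open>
  Write \<open>h(k) = q^k (1 + q^(2k+1)) / (1 - q^(2k+1))^2\<close>. The heart of the matter is the
  Lambert-series evaluation \<open>\<Sum>k h(k) = (q^2;q^2)\<^sub>\<infinity>^4 / (q;q^2)\<^sub>\<infinity>^4\<close>. It is the limit
  \<open>N \<rightarrow> \<infinity>\<close> (by Tannery's theorem) of the terminating identity \<open>\<Sum>k\<le>N h(k) W(N,k) = 1\<close>,
  where \<open>W(N,k)\<close> is a ratio of finite products tending to \<open>(q;q^2)\<^sub>\<infinity>^4 / (q^2;q^2)\<^sub>\<infinity>^4\<close>;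
  the terminating identity follows by induction on \<open>N\<close> from a Wilf--Zeilberger certificate.

  The series of the theorem differs from \<open>c(q) \<Sum>n\<ge>1 h(n)\<close>, for an explicit rational \<open>c(q)\<close>,
  by a telescoping series, and \<open>\<pi>\<^sub>q^2\<close> times the prefactor on the right is \<open>c(q)\<close> times
  \<open>(q^2;q^2)\<^sub>\<infinity>^4 / (q;q^2)\<^sub>\<infinity>^4\<close>.
\<close>

definition qpoch :: "real \<Rightarrow> real \<Rightarrow> nat \<Rightarrow> real" where
  "qpoch z q n = (\<Prod>k<n. 1 - z * q^k)"

abbreviation qpoch_odd :: "real \<Rightarrow> nat \<Rightarrow> real" where
  "qpoch_odd q \<equiv> qpoch q (q^2)"

abbreviation qpoch_even :: "real \<Rightarrow> nat \<Rightarrow> real" where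
  "qpoch_even q \<equiv> qpoch (q^2) (q^2)"

lemma qpoch_0 [simp]: "qpoch z q 0 = 1"
  by (simp add: qpoch_def)

lemma qpoch_Suc: "qpoch z q (Suc n) = qpoch z q n * (1 - z * q^n)"
  by (simp add: qpoch_def)

lemma mult_power_less_one: "0 \<le> z \<Longrightarrow> z < 1 \<Longrightarrow> 0 \<le> q \<Longrightarrow> q \<le> 1 \<Longrightarrow> z * q^n < (1::real)"
  by (metis le_less_trans mult_left_le power_le_one zero_le_power)

lemma qpoch_pos: "0 \<le> z \<Longrightarrow> z < 1 \<Longrightarrow> 0 \<le> q \<Longrightarrow> q \<le> 1 \<Longrightarrow> 0 < qpoch z q n"
  unfolding qpoch_def by (intro prod_pos) (simp add: mult_power_less_one)

lemma qpoch_le_one: "0 \<le> z \<Longrightarrow> z \<le> 1 \<Longrightarrow> 0 \<le> q \<Longrightarrow> q \<le> 1 \<Longrightarrow> qpoch z q n \<le> 1"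
  unfolding qpoch_def by (intro prod_le_1) (auto simp: mult_le_one power_le_one)

lemma decseq_qpoch:
  assumes "0 \<le> z" "z < 1" "0 \<le> q" "q \<le> 1"
  shows "decseq (qpoch z q)"
proof (rule decseq_SucI)
  fix n
  show "qpoch z q (Suc n) \<le> qpoch z q n"
    using qpoch_pos[OF assms, of n] assms by (simp add: qpoch_Suc mult_left_le)
qed

lemma convergent_prod_qpoch:
  fixes q z :: real
  assumes "\<bar>q\<bar> < 1"
  shows "convergent_prod (\<lambda>k. 1 - z * q^k)"
proof -
  have "summable (\<lambda>k. \<bar>z\<bar> * \<bar>q\<bar>^k)"
    by (intro summable_mult summable_geometric) (use assms in simp)
  then have "summable (\<lambda>k. norm ((1 - z * q^k) - 1))"
    by (simp add: abs_mult power_abs)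
  then show ?thesis
    by (intro abs_convergent_prod_imp_convergent_prod summable_imp_abs_convergent_prod)
qed

lemma qpoch_tendsto:
  assumes "\<bar>q\<bar> < 1"
  shows "qpoch z q \<longlonglongrightarrow> qpoch_inf z q"
proof -
  have "(\<lambda>n. qpoch z q (Suc n)) \<longlonglongrightarrow> qpoch_inf z q"
    using convergent_prod_LIMSEQ[OF convergent_prod_qpoch[OF assms]]
    by (simp add: qpoch_def qpoch_inf_def lessThan_Suc_atMost)
  then show ?thesis
    by (rule filterlim_sequentially_Suc[THEN iffD1])
qed

lemma qpoch_inf_le_qpoch:
  assumes "0 \<le> z" "z < 1" "0 \<le> q" "q < 1"
  shows "qpoch_inf z q \<le> qpoch z q n"
  using assms by (intro decseq_ge[OF decseq_qpoch qpoch_tendsto]) auto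

lemma qpoch_inf_pos:
  assumes "0 \<le> z" "z < 1" "0 \<le> q" "q < 1"
  shows "0 < qpoch_inf z q"
proof -
  have "1 - z * q^k \<noteq> 0" for k
    using mult_power_less_one[of z q k] assms by simp
  then have "qpoch_inf z q \<noteq> 0"
    unfolding qpoch_inf_def using assms by (intro prodinf_nonzero convergent_prod_qpoch) auto
  moreover have "0 \<le> qpoch_inf z q"
    using assms qpoch_pos[of z q] by (intro LIMSEQ_le_const[OF qpoch_tendsto]) (auto intro: less_imp_le)
  ultimately show ?thesis
    by simp
qed

definition lambert_term :: "real \<Rightarrow> nat \<Rightarrow> real" where
  "lambert_term q k = q^k * (1 + q^(2*k+1)) / (1 - q^(2*k+1))^2"

text \<open>Only \<open>wz_weight q N k\<close> with \<open>k \<le> N\<close> and \<open>wz_cert q N k\<close> with \<open>k \<le> N + 1\<close> are meaningful: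
  beyond that the truncated subtractions \<open>N - k\<close>, \<open>N + 1 - k\<close> produce junk.\<close>

definition wz_weight :: "real \<Rightarrow> nat \<Rightarrow> nat \<Rightarrow> real" where
  "wz_weight q N k = qpoch_odd q (N+k+1) * qpoch_odd q (N-k) * qpoch_odd q (N+1)^2
     / (qpoch_even q (N+k+1) * qpoch_even q (N-k) * qpoch_even q N^2)"

definition wz_cert :: "real \<Rightarrow> nat \<Rightarrow> nat \<Rightarrow> real" where
  "wz_cert q N k = - (q^(2*N+2) / q^k) * (1 - q^(4*N+5)) * (1 - q^(2*k))
     * qpoch_odd q (N+k+1) * qpoch_odd q (N+1-k) * qpoch_odd q (N+1)^2
     / ((1 - q^(2*N+2))^3 * (1 - q^(2*N+3))
        * qpoch_even q (N+k+1) * qpoch_even q (N+1-k) * qpoch_even q N^2)"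

text \<open>\<open>wz_step\<close> divided by \<open>wz_weight q (m+k) k\<close>, in the variables \<open>z = q^k\<close>, \<open>w = q^(2m)\<close>
  of \<open>wz_shift_ratios\<close>.\<close>

lemma wz_rational_identity:
  fixes q z w :: real
  assumes "1 - q*z^2 \<noteq> 0" "1 - q^4*w*z^4 \<noteq> 0" "1 - q^2*w \<noteq> 0" "1 - q^2*w*z^2 \<noteq> 0"
    "1 - q^3*w*z^2 \<noteq> 0"
  shows "z*(1+q*z^2)/(1-q*z^2)^2
      * ((1-q^3*w*z^4)*(1-q*w)*(1-q^3*w*z^2)^2/((1-q^4*w*z^4)*(1-q^2*w)*(1-q^2*w*z^2)^2))
    = z*(1+q*z^2)/(1-q*z^2)^2
      - q*w*z*(1-q^5*w^2*z^4)*(1-q^2*z^2)*(1-q^3*w*z^4)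
        / ((1-q^2*w*z^2)^3*(1-q^3*w*z^2)*(1-q^4*w*z^4))
      + q^2*w*z*(1-q^5*w^2*z^4)*(1-z^2)*(1-q*w)
        / ((1-q^2*w*z^2)^3*(1-q^3*w*z^2)*(1-q^2*w))"
proof -
  obtain D1 D2 D3 D4 D5 where D: "D1 = 1 - q*z^2" "D2 = 1 - q^4*w*z^4" "D3 = 1 - q^2*w"
    "D4 = 1 - q^2*w*z^2" "D5 = 1 - q^3*w*z^2"
    by blast
  have "D1 \<noteq> 0" "D2 \<noteq> 0" "D3 \<noteq> 0" "D4 \<noteq> 0" "D5 \<noteq> 0"
    using assms D by auto
  then have "z*(1+q*z^2)/D1^2 * ((1-q^3*w*z^4)*(1-q*w)*D5^2/(D2*D3*D4^2))
    = z*(1+q*z^2)/D1^2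
      - q*w*z*(1-q^5*w^2*z^4)*(1-q^2*z^2)*(1-q^3*w*z^4) / (D4^3*D5*D2)
      + q^2*w*z*(1-q^5*w^2*z^4)*(1-z^2)*(1-q*w) / (D4^3*D5*D3)"
    by (simp add: field_simps) (unfold D, algebra)
  then show ?thesis
    using D by simp
qed

lemma wz_shift_ratios:
  fixes q :: real and k m :: nat
  assumes "q \<noteq> 0"
  defines "z \<equiv> q^k" and "w \<equiv> q^(2*m)"
  shows "lambert_term q k = z*(1+q*z^2)/(1-q*z^2)^2"
    and "wz_weight q (Suc (m+k)) k = wz_weight q (m+k) k
      * ((1-q^3*w*z^4)*(1-q*w)*(1-q^3*w*z^2)^2/((1-q^4*w*z^4)*(1-q^2*w)*(1-q^2*w*z^2)^2))"
    and "wz_cert q (m+k) (Suc k) = - wz_weight q (m+k) k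
      * (q*w*z*(1-q^5*w^2*z^4)*(1-q^2*z^2)*(1-q^3*w*z^4)
          / ((1-q^2*w*z^2)^3*(1-q^3*w*z^2)*(1-q^4*w*z^4)))"
    and "wz_cert q (m+k) k = - wz_weight q (m+k) k
      * (q^2*w*z*(1-q^5*w^2*z^4)*(1-z^2)*(1-q*w) / ((1-q^2*w*z^2)^3*(1-q^3*w*z^2)*(1-q^2*w)))"
proof -
  have powers: "q*(q^2)^(m+k+k+1) = q^3*w*z^4" "q*(q^2)^m = q*w" "q*(q^2)^(m+k+1) = q^3*w*z^2"
    "q^2*(q^2)^(m+k+k+1) = q^4*w*z^4" "q^2*(q^2)^m = q^2*w" "q^2*(q^2)^(m+k) = q^2*w*z^2"
    "q^(2*k+1) = q*z^2" "q^(2*(m+k)+2) = q^2*w*z^2" "q^(4*(m+k)+5) = q^5*w^2*z^4"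
    "q^(2*Suc k) = q^2*z^2" "q^(2*k) = z^2" "q^(2*(m+k)+3) = q^3*w*z^2"
    unfolding z_def w_def
    by (simp_all only: flip: power_mult power_add power_Suc) (rule arg_cong[where f = "power q"], simp)+
  have "q^(2*(m+k)+2) = q^Suc k * (q*w*z)" "q^(2*(m+k)+2) = q^k * (q^2*w*z)"
    unfolding z_def w_def
    by (simp_all only: flip: power_mult power_add power_Suc mult.assoc)
      (rule arg_cong[where f = "power q"], simp)+
  then have ratios: "q^(2*(m+k)+2) / q^Suc k = q*w*z" "q^(2*(m+k)+2) / q^k = q^2*w*z"
    using assms by simp_all
  have idx: "Suc (m+k) + k + 1 = Suc (m+k+k+1)" "Suc (m+k) - k = Suc m" "Suc (m+k) + 1 = Suc (m+k+1)"
    "m + k - k = m" "m + k + Suc k + 1 = Suc (m+k+k+1)" "m + k + 1 - Suc k = m" "m + k + 1 - k = Suc m"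
    by simp_all
  show "lambert_term q k = z*(1+q*z^2)/(1-q*z^2)^2"
    unfolding lambert_term_def powers z_def ..
  show "wz_weight q (Suc (m+k)) k = wz_weight q (m+k) k
      * ((1-q^3*w*z^4)*(1-q*w)*(1-q^3*w*z^2)^2/((1-q^4*w*z^4)*(1-q^2*w)*(1-q^2*w*z^2)^2))"
    unfolding wz_weight_def idx qpoch_Suc powers
    by (simp add: divide_inverse inverse_mult_distrib power_mult_distrib mult_ac)
  show "wz_cert q (m+k) (Suc k) = - wz_weight q (m+k) k
      * (q*w*z*(1-q^5*w^2*z^4)*(1-q^2*z^2)*(1-q^3*w*z^4)
          / ((1-q^2*w*z^2)^3*(1-q^3*w*z^2)*(1-q^4*w*z^4)))"
    "wz_cert q (m+k) k = - wz_weight q (m+k) k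
      * (q^2*w*z*(1-q^5*w^2*z^4)*(1-z^2)*(1-q*w) / ((1-q^2*w*z^2)^3*(1-q^3*w*z^2)*(1-q^2*w)))"
    unfolding wz_cert_def ratios unfolding wz_weight_def idx qpoch_Suc powers
    by (simp_all add: divide_inverse inverse_mult_distrib power_mult_distrib mult_ac)
qed

lemma wz_step:
  assumes q: "0 < q" "q < 1"
  shows "lambert_term q k * wz_weight q (Suc (m+k)) k
    = lambert_term q k * wz_weight q (m+k) k + wz_cert q (m+k) (Suc k) - wz_cert q (m+k) k"
proof -
  define z w where "z = q^k" and "w = q^(2*m)"
  have powers: "q*(q^2)^k = q*z^2" "q*(q^2)^(m+k+1) = q^3*w*z^2" "q^2*(q^2)^(m+k+k+1) = q^4*w*z^4"
    "q^2*(q^2)^m = q^2*w" "q^2*(q^2)^(m+k) = q^2*w*z^2"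
    unfolding z_def w_def
    by (simp_all only: flip: power_mult power_add power_Suc) (rule arg_cong[where f = "power q"], simp)+
  have "q^2 < 1"
    using q by (simp add: power_less_one_iff)
  then have "q*(q^2)^k < 1" "q*(q^2)^(m+k+1) < 1" "q^2*(q^2)^(m+k+k+1) < 1" "q^2*(q^2)^m < 1"
    "q^2*(q^2)^(m+k) < 1"
    using q by - (rule mult_power_less_one; simp)+
  then have "1 - q*z^2 \<noteq> 0" "1 - q^4*w*z^4 \<noteq> 0" "1 - q^2*w \<noteq> 0" "1 - q^2*w*z^2 \<noteq> 0"
    "1 - q^3*w*z^2 \<noteq> 0"
    unfolding powers by simp_all
  note identity = wz_rational_identity[OF this, unfolded z_def w_def]
  have "q \<noteq> 0"
    using q by simp
  with identity show ?thesis
    unfolding wz_shift_ratios[OF \<open>q \<noteq> 0\<close>] by algebra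
qed

lemma wz_diagonal_ratios:
  fixes q :: real and N :: nat
  assumes "q \<noteq> 0"
  defines "y \<equiv> q^(N+1)"
    and "P \<equiv> qpoch_odd q (2*N+2) * qpoch_odd q (N+1)^2 / (qpoch_even q (2*N+2) * qpoch_even q N^2)"
  shows "lambert_term q (Suc N) = y*(1+q*y^2)/(1-q*y^2)^2"
    and "wz_weight q (Suc N) (Suc N) = P * ((1-q*y^4)*(1-q*y^2)^2/((1-q^2*y^4)*(1-y^2)^2))"
    and "wz_cert q N (Suc N) = - P * (y*(1-q*y^4)*(1-y^2)/((1-y^2)^3*(1-q*y^2)))"
proof -
  have powers: "q*(q^2)^(2*N+2) = q*y^4" "q*(q^2)^(N+1) = q*y^2" "q^2*(q^2)^(2*N+2) = q^2*y^4"
    "q^2*(q^2)^N = y^2" "q^Suc N = y" "q^(2*Suc N+1) = q*y^2" "q^(4*N+5) = q*y^4"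
    "q^(2*Suc N) = y^2" "q^(2*N+3) = q*y^2" "q^(2*N+2) = y^2"
    unfolding y_def
    by (simp_all only: flip: power_mult power_add power_Suc) (rule arg_cong[where f = "power q"], simp)+
  have "q^(2*N+2) = q^Suc N * y"
    unfolding y_def by (simp only: flip: power_add) (rule arg_cong[where f = "power q"], simp)
  then have ratio: "q^(2*N+2) / q^Suc N = y"
    using assms by simp
  have idx: "Suc N + Suc N + 1 = Suc (2*N+2)" "Suc N - Suc N = 0" "Suc N + 1 = Suc (N+1)"
    "N + Suc N + 1 = 2*N+2" "N + 1 - Suc N = 0"
    by simp_all
  show "lambert_term q (Suc N) = y*(1+q*y^2)/(1-q*y^2)^2"
    unfolding lambert_term_def powers ..
  show "wz_weight q (Suc N) (Suc N) = P * ((1-q*y^4)*(1-q*y^2)^2/((1-q^2*y^4)*(1-y^2)^2))"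
    unfolding wz_weight_def P_def idx qpoch_Suc powers
    by (simp add: divide_inverse inverse_mult_distrib power_mult_distrib mult_ac)
  show "wz_cert q N (Suc N) = - P * (y*(1-q*y^4)*(1-y^2)/((1-y^2)^3*(1-q*y^2)))"
    unfolding wz_cert_def P_def idx ratio unfolding powers
    by (simp add: divide_inverse inverse_mult_distrib power_mult_distrib mult_ac)
qed

lemma wz_diagonal:
  assumes q: "0 < q" "q < 1"
  shows "lambert_term q (Suc N) * wz_weight q (Suc N) (Suc N) = - wz_cert q N (Suc N)"
proof -
  define y where "y = q^(N+1)"
  have "q^2 < 1"
    using q by (simp add: power_less_one_iff)
  then have "q*(q^2)^(N+1) < 1"
    using q by (intro mult_power_less_one) simp_all
  moreover have "q*(q^2)^(N+1) = q*y^2"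
    unfolding y_def by (simp only: flip: power_mult power_Suc) (rule arg_cong[where f = "power q"], simp)
  moreover have y: "0 < y" "y < 1"
    using q by (simp_all add: y_def power_less_one_iff del: power_Suc)
  moreover have "y^2 < 1"
    using y mult_strict_mono[of y 1 y 1] by (simp add: power2_eq_square)
  moreover have "0 < q*y^2"
    using q y by simp
  ultimately have "y \<noteq> 0" "1 - y^2 \<noteq> 0" "1 - q*y^2 \<noteq> 0" "1 + q*y^2 \<noteq> 0"
    by auto
  moreover have "y*c/b^2 * (f*b^2/((b*c)*a^2)) = y*f*a/(a^3*b)"
    if "a \<noteq> 0" "b \<noteq> 0" "c \<noteq> 0" for a b c f :: real
    using that by (simp add: field_simps power2_eq_square power3_eq_cube)
  moreover have "1 - q^2*y^4 = (1-q*y^2)*(1+q*y^2)"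
    by algebra
  ultimately have identity: "y*(1+q*y^2)/(1-q*y^2)^2 * ((1-q*y^4)*(1-q*y^2)^2/((1-q^2*y^4)*(1-y^2)^2))
      = y*(1-q*y^4)*(1-y^2)/((1-y^2)^3*(1-q*y^2))"
    by simp
  have "q \<noteq> 0"
    using q by simp
  with identity[unfolded y_def] show ?thesis
    unfolding wz_diagonal_ratios[OF \<open>q \<noteq> 0\<close>] by algebra
qed

lemma sum_wz_weight_eq_1:
  assumes q: "0 < q" "q < 1"
  shows "(\<Sum>k\<le>N. lambert_term q k * wz_weight q N k) = 1"
proof (induction N)
  case 0
  have "lambert_term q 0 * wz_weight q 0 0 = (1+q)/(1-q)^2 * ((1-q)*(1-q)^2/((1-q)*(1+q)))"
    by (simp add: lambert_term_def wz_weight_def qpoch_def power2_eq_square algebra_simps)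
  also have "\<dots> = 1"
    using q mult_strict_mono[of q 1 q 1] by (simp add: field_simps)
  finally show ?case
    by simp
next
  case (Suc N)
  have "(\<Sum>k\<le>N. lambert_term q k * wz_weight q (Suc N) k)
      = (\<Sum>k\<le>N. lambert_term q k * wz_weight q N k + (wz_cert q N (Suc k) - wz_cert q N k))"
  proof (rule sum.cong)
    fix k
    assume "k \<in> {..N}"
    then have "N = (N - k) + k"
      by simp
    then show "lambert_term q k * wz_weight q (Suc N) k
        = lambert_term q k * wz_weight q N k + (wz_cert q N (Suc k) - wz_cert q N k)"
      using wz_step[OF q, of k "N - k"] by simp
  qed simp
  also have "\<dots> = 1 + wz_cert q N (Suc N)"
    using sum_lessThan_telescope[of "wz_cert q N" "Suc N"]
    by (simp add: sum.distrib Suc.IH lessThan_Suc_atMost wz_cert_def)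
  finally show ?case
    using wz_diagonal[OF q, of N] by simp
qed

lemma wz_weight_tendsto:
  assumes q: "0 < q" "q < 1"
  shows "(\<lambda>N. wz_weight q N k) \<longlonglongrightarrow> qpoch_inf q (q^2)^4 / qpoch_inf (q^2) (q^2)^4"
proof -
  let ?O = "qpoch_inf q (q^2)" and ?E = "qpoch_inf (q^2) (q^2)"
  have q2: "0 \<le> q^2" "q^2 < 1"
    using q by (simp_all add: power_less_one_iff)
  then have odd: "qpoch_odd q \<longlonglongrightarrow> ?O" and even: "qpoch_even q \<longlonglongrightarrow> ?E"
    by (simp_all add: qpoch_tendsto)
  have shift: "(\<lambda>N. f (N + j)) \<longlonglongrightarrow> l" "(\<lambda>N. f (N - j)) \<longlonglongrightarrow> l"
    if "f \<longlonglongrightarrow> l" for f :: "nat \<Rightarrow> real" and l j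
    using that by (simp_all add: LIMSEQ_ignore_initial_segment filterlim_compose[OF _ filterlim_minus_const_nat_at_top])
  have "?E \<noteq> 0"
    using qpoch_inf_pos[of "q^2" "q^2"] q2 by simp
  then have "(\<lambda>N. wz_weight q N k) \<longlonglongrightarrow> ?O * ?O * ?O^2 / (?E * ?E * ?E^2)"
    unfolding wz_weight_def add.assoc
    by (intro tendsto_intros shift[OF odd] shift[OF even] even) simp
  also have "?O * ?O * ?O^2 / (?E * ?E * ?E^2) = ?O^4 / ?E^4"
    by (simp add: eval_nat_numeral)
  finally show ?thesis .
qed

lemma wz_weight_bounds:
  assumes q: "0 < q" "q < 1"
  shows "0 \<le> wz_weight q N k" "wz_weight q N k \<le> 1 / qpoch_inf (q^2) (q^2)^4"
proof -
  let ?E = "qpoch_inf (q^2) (q^2)"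
  have q2: "0 \<le> q^2" "q^2 < 1"
    using q by (simp_all add: power_less_one_iff)
  have odd: "0 < qpoch_odd q n" "qpoch_odd q n \<le> 1" for n
    using q q2 by (simp_all add: qpoch_pos qpoch_le_one)
  have even: "0 < qpoch_even q n" "?E \<le> qpoch_even q n" for n
    using q2 by (simp_all add: qpoch_pos qpoch_inf_le_qpoch)
  have E: "0 < ?E"
    using q2 by (simp add: qpoch_inf_pos)
  have numer: "0 \<le> qpoch_odd q (N+k+1) * qpoch_odd q (N-k) * qpoch_odd q (N+1)^2"
    "qpoch_odd q (N+k+1) * qpoch_odd q (N-k) * qpoch_odd q (N+1)^2 \<le> 1"
    by (meson odd less_imp_le mult_nonneg_nonneg zero_le_power)
      (intro mult_le_one power_le_one; simp add: odd less_imp_le)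
  have "?E * ?E * ?E^2 \<le> qpoch_even q (N+k+1) * qpoch_even q (N-k) * qpoch_even q N^2"
    using E even by (intro mult_mono power_mono) (auto intro: less_imp_le)
  then have denom: "?E^4 \<le> qpoch_even q (N+k+1) * qpoch_even q (N-k) * qpoch_even q N^2"
    by (simp add: eval_nat_numeral)
  show "0 \<le> wz_weight q N k"
    unfolding wz_weight_def by (intro divide_nonneg_pos numer(1) mult_pos_pos zero_less_power even(1))
  show "wz_weight q N k \<le> 1 / ?E^4"
    unfolding wz_weight_def using numer denom E by (intro frac_le) auto
qed

lemma lambert_term_bounds:
  assumes q: "0 < q" "q < 1"
  shows "0 \<le> lambert_term q k" "lambert_term q k \<le> 2 / (1-q)^2 * q^k"
proof -
  have "q^(2*k+1) \<le> q"
    using q by (simp add: power_le_one mult_left_le)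
  then have "(1-q)^2 \<le> (1 - q^(2*k+1))^2"
    using q by (auto intro: power_mono)
  moreover have "q^(2*k+1) \<le> 1"
    by (rule power_le_one) (use q in auto)
  moreover have "0 < (1-q)^2"
    using q by simp
  ultimately have "q^k * (1 + q^(2*k+1)) / (1 - q^(2*k+1))^2 \<le> q^k * 2 / (1-q)^2"
    using q by (intro frac_le mult_left_mono) auto
  then show "lambert_term q k \<le> 2 / (1-q)^2 * q^k"
    by (simp add: lambert_term_def mult.commute)
  show "0 \<le> lambert_term q k"
    using q by (simp add: lambert_term_def)
qed

lemma summable_lambert_term:
  assumes q: "0 < q" "q < 1"
  shows "summable (lambert_term q)"
proof (rule summable_comparison_test)
  show "\<exists>N. \<forall>n\<ge>N. norm (lambert_term q n) \<le> 2 / (1-q)^2 * q^n"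
    using lambert_term_bounds[OF q] by auto
  show "summable (\<lambda>n. 2 / (1-q)^2 * q^n)"
    using q by (intro summable_mult summable_geometric) simp
qed

lemma tendsto_sum_lambert_wz_weight:
  assumes q: "0 < q" "q < 1"
  shows "(\<lambda>N. \<Sum>k\<le>N. lambert_term q k * wz_weight q N k)
    \<longlonglongrightarrow> (\<Sum>k. lambert_term q k) * (qpoch_inf q (q^2)^4 / qpoch_inf (q^2) (q^2)^4)"
proof -
  let ?O = "qpoch_inf q (q^2)" and ?E = "qpoch_inf (q^2) (q^2)"
  define a where "a k N = (if k \<le> N then lambert_term q k * wz_weight q N k else 0)" for k N
  have limit: "(\<lambda>N. a k N) \<longlonglongrightarrow> lambert_term q k * (?O^4 / ?E^4)" for k
  proof (rule Lim_transform_eventually)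
    show "(\<lambda>N. lambert_term q k * wz_weight q N k) \<longlonglongrightarrow> lambert_term q k * (?O^4 / ?E^4)"
      by (intro tendsto_mult tendsto_const wz_weight_tendsto[OF q])
    show "\<forall>\<^sub>F N in sequentially. lambert_term q k * wz_weight q N k = a k N"
      using eventually_ge_at_top[of k] by eventually_elim (simp add: a_def)
  qed
  have "norm (a k N) \<le> lambert_term q k / ?E^4" for k N
  proof -
    have "lambert_term q k * wz_weight q N k \<le> lambert_term q k * (1 / ?E^4)"
      by (intro mult_left_mono lambert_term_bounds(1)[OF q] wz_weight_bounds(2)[OF q])
    then show ?thesis
      using lambert_term_bounds(1)[OF q, of k] wz_weight_bounds(1)[OF q, of N k]
      by (simp add: a_def)
  qed
  then have bound: "\<forall>\<^sub>F (k, N) in at_top \<times>\<^sub>F sequentially. norm (a k N) \<le> lambert_term q k / ?E^4"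
    by (intro always_eventually) auto
  have "summable (\<lambda>k. lambert_term q k / ?E^4)"
    by (intro summable_divide summable_lambert_term[OF q])
  then have "(\<lambda>N. \<Sum>k. a k N) \<longlonglongrightarrow> (\<Sum>k. lambert_term q k * (?O^4 / ?E^4))"
    using tannerys_theorem[OF limit bound] by simp
  moreover have "(\<Sum>k. a k N) = (\<Sum>k\<le>N. lambert_term q k * wz_weight q N k)" for N
    by (subst suminf_finite[of "{..N}"]) (auto simp: a_def)
  ultimately have "(\<lambda>N. \<Sum>k\<le>N. lambert_term q k * wz_weight q N k)
      \<longlonglongrightarrow> (\<Sum>k. lambert_term q k * (?O^4 / ?E^4))"
    by simp
  then show ?thesis
    by (simp only: suminf_mult2[OF summable_lambert_term[OF q]])
qed

lemma suminf_lambert_term: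
  assumes q: "0 < q" "q < 1"
  shows "(\<Sum>k. lambert_term q k) = qpoch_inf (q^2) (q^2)^4 / qpoch_inf q (q^2)^4"
proof -
  let ?O = "qpoch_inf q (q^2)" and ?E = "qpoch_inf (q^2) (q^2)"
  have "(\<lambda>N. 1) \<longlonglongrightarrow> (\<Sum>k. lambert_term q k) * (?O^4 / ?E^4)"
    using tendsto_sum_lambert_wz_weight[OF q] by (simp add: sum_wz_weight_eq_1[OF q])
  then have "(\<Sum>k. lambert_term q k) * (?O^4 / ?E^4) = 1"
    using LIMSEQ_unique[OF _ tendsto_const] by metis
  moreover have "0 < ?O" "0 < ?E"
    using q by (simp_all add: qpoch_inf_pos power_less_one_iff)
  ultimately show ?thesis
    by (simp add: field_simps)
qed

text \<open>\<open>tail q n\<close> is an antidifference of the summand plus \<open>lambert_coeff q * lambert_term q (n+1)\<close>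
  (\<open>summand_eq_tail_diff\<close>); its quintic numerator \<open>tail_poly\<close> is obtained by solving that
  requirement for a polynomial in \<open>q^(2n+2)\<close>.\<close>

definition tail_poly :: "real \<Rightarrow> real \<Rightarrow> real" where
  "tail_poly q u = q^3*(1-q^3)*(1-q^5)*(1-u^5) - 3*q^2*(1-q^5)^2*(u-u^4)
     + (3*q+6*q^4-q^5-8*q^6-8*q^8-q^9+6*q^10+3*q^13)*(u^2-u^3)"

definition tail_denom :: "real \<Rightarrow> real" where
  "tail_denom q = (1-q)^3*(1-q^2)^3*(1-q^4)^3"

definition tail :: "real \<Rightarrow> nat \<Rightarrow> real" where
  "tail q n = q^(n+1) * tail_poly q (q^(2*(n+1))) / tail_denom q
     / ((1-q^(2*n+1))^3 * (1-q^(2*n+3))^3)"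

definition lambert_coeff :: "real \<Rightarrow> real" where
  "lambert_coeff q = q^3*(1+q+q^2)*(1+q+q^2+q^3+q^4) / ((1-q^2)^6*(1+q^2)^3)"

lemma lambert_coeff_eq:
  assumes "tail_denom q \<noteq> 0"
  shows "lambert_coeff q = q^3*(1-q^3)*(1-q^5)*(1-q) / tail_denom q"
proof -
  have factor: "1-q^3 = (1-q)*(1+q+q^2)" "1-q^5 = (1-q)*(1+q+q^2+q^3+q^4)" "1-q^4 = (1-q^2)*(1+q^2)"
    by algebra+
  then have "1 - q \<noteq> 0" "1 - q^2 \<noteq> 0" "1 + q^2 \<noteq> 0"
    using assms by (auto simp: tail_denom_def)
  moreover have "x*f*g/(b^6*c^3) = x*(a*f)*(a*g)*a/(a^3*b^3*(b*c)^3)"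
    if "a \<noteq> 0" "b \<noteq> 0" "c \<noteq> 0" for x f g a b c :: real
    using that by (simp add: field_simps eval_nat_numeral)
  ultimately show ?thesis
    unfolding lambert_coeff_def tail_denom_def factor by blast
qed

lemma tail_poly_recurrence:
  "tail_denom q * q^6 * s^3*(1+q^3 * s)*(1-q^3 * s)
     + q^3*(1-q^3)*(1-q^5)*(1-q)*(1+q^3 * s)*(1-q^3 * s)*(1-q * s)^3*(1-q^5 * s)^3
   = tail_poly q (q^2 * s)*(1-q^5 * s)^3 - q*tail_poly q (q^4 * s)*(1-q * s)^3"
  unfolding tail_poly_def tail_denom_def by algebra

lemma tail_rational_identity:
  fixes q s t :: real
  assumes "tail_denom q \<noteq> 0" "1 - q * s \<noteq> 0" "1 - q^3 * s \<noteq> 0" "1 - q^5 * s \<noteq> 0"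
  shows "(1+q^3 * s)*(q^7*t * s^3)/((1-q * s)^3*(1-q^3 * s)^2*(1-q^5 * s)^3)
      + q^3*(1-q^3)*(1-q^5)*(1-q) / tail_denom q * (q*t*(1+q^3 * s)/(1-q^3 * s)^2)
    = q*t*tail_poly q (q^2 * s)/tail_denom q/((1-q * s)^3*(1-q^3 * s)^3)
      - q^2*t*tail_poly q (q^4 * s)/tail_denom q/((1-q^3 * s)^3*(1-q^5 * s)^3)"
proof -
  obtain D A B C where names: "D = tail_denom q" "A = 1 - q * s" "B = 1 - q^3 * s" "C = 1 - q^5 * s"
    by blast
  have nonzero: "D \<noteq> 0" "A \<noteq> 0" "B \<noteq> 0" "C \<noteq> 0"
    using assms names by auto
  have numer: "q^7*t * s^3*(1+q^3 * s)*B*D + q^3*(1-q^3)*(1-q^5)*(1-q)*q*t*(1+q^3 * s)*B*A^3*C^3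
      = q*t*tail_poly q (q^2 * s)*C^3 - q^2*t*tail_poly q (q^4 * s)*A^3"
    using arg_cong[OF tail_poly_recurrence[of q s], of "\<lambda>x. q*t*x"] unfolding names by algebra
  define K where "K = D*A^3*B^3*C^3"
  have "(1+q^3 * s)*(q^7*t * s^3)/(A^3*B^2*C^3) = q^7*t * s^3*(1+q^3 * s)*B*D/K"
    "q^3*(1-q^3)*(1-q^5)*(1-q)/D * (q*t*(1+q^3 * s)/B^2)
      = q^3*(1-q^3)*(1-q^5)*(1-q)*q*t*(1+q^3 * s)*B*A^3*C^3/K"
    "q*t*tail_poly q (q^2 * s)/D/(A^3*B^3) = q*t*tail_poly q (q^2 * s)*C^3/K"
    "q^2*t*tail_poly q (q^4 * s)/D/(B^3*C^3) = q^2*t*tail_poly q (q^4 * s)*A^3/K"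
    using nonzero by (simp_all add: K_def field_simps power3_eq_cube power2_eq_square mult_ac)
  then have "(1+q^3 * s)*(q^7*t * s^3)/(A^3*B^2*C^3)
      + q^3*(1-q^3)*(1-q^5)*(1-q)/D * (q*t*(1+q^3 * s)/B^2)
    = q*t*tail_poly q (q^2 * s)/D/(A^3*B^3) - q^2*t*tail_poly q (q^4 * s)/D/(B^3*C^3)"
    by (simp only: add_divide_distrib[symmetric] diff_divide_distrib[symmetric] numer)
  then show ?thesis
    unfolding names .
qed

lemma tail_denom_pos: "0 < q \<Longrightarrow> q < 1 \<Longrightarrow> 0 < tail_denom q"
  unfolding tail_denom_def by (simp add: power_less_one_iff)

lemma summand_eq_tail_diff:
  assumes q: "0 < q" "q < 1"
  shows "(1 + q^(2*(n+1)+1)) * q^(7*(n+1)) /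
           ((1 - q^(2*(n+1)-1))^3 * (1 - q^(2*(n+1)+1))^2 * (1 - q^(2*(n+1)+3))^3)
         + lambert_coeff q * lambert_term q (Suc n) = tail q n - tail q (Suc n)"
proof -
  define t s where "t = q^n" and "s = (q^2)^n"
  have powers: "q^(2*(n+1)+1) = q^3 * s" "q^(7*(n+1)) = q^7*t * s^3" "q^(2*(n+1)-1) = q * s"
    "q^(2*(n+1)+3) = q^5 * s" "q^Suc n = q*t" "q^(2*Suc n+1) = q^3 * s" "q^(n+1) = q*t"
    "q^(2*(n+1)) = q^2 * s" "q^(2*n+1) = q * s" "q^(2*n+3) = q^3 * s" "q^(Suc n+1) = q^2*t"
    "q^(2*(Suc n+1)) = q^4 * s" "q^(2*Suc n+3) = q^5 * s"
    unfolding t_def s_def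
    by (simp_all only: flip: power_mult power_add power_Suc) (rule arg_cong[where f = "power q"], simp)+
  have "q^2 \<le> 1" "q^3 < 1" "q^5 < 1"
    using q by (simp_all add: power_le_one power_less_one_iff)
  then have "q * s < 1" "q^3 * s < 1" "q^5 * s < 1"
    unfolding s_def using q by (intro mult_power_less_one; simp)+
  then have "1 - q * s \<noteq> 0" "1 - q^3 * s \<noteq> 0" "1 - q^5 * s \<noteq> 0"
    by simp_all
  moreover have denom: "tail_denom q \<noteq> 0"
    using tail_denom_pos[OF q] by simp
  ultimately show ?thesis
    using tail_rational_identity[of q s t]
    unfolding tail_def lambert_term_def powers lambert_coeff_eq[OF denom] by simp
qed

lemma tail_tendsto_0:
  assumes q: "0 < q" "q < 1"
  shows "tail q \<longlonglongrightarrow> 0"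
proof -
  define g where "g t = q * t * tail_poly q (q^2 * t^2) / tail_denom q
      / ((1 - q * t^2)^3 * (1 - q^3 * t^2)^3)" for t
  have "q^(n+1) = q * q^n" "q^(2*(n+1)) = q^2 * (q^n)^2" "q^(2*n+1) = q * (q^n)^2"
    "q^(2*n+3) = q^3 * (q^n)^2" for n
    by (simp_all only: flip: power_mult power_add power_Suc) (rule arg_cong[where f = "power q"], simp)+
  then have "tail q = (\<lambda>n. g (q^n))"
    unfolding tail_def g_def by (simp only:)
  moreover have "isCont g 0"
    unfolding g_def tail_poly_def using tail_denom_pos[OF q] by (intro continuous_intros) auto
  ultimately show ?thesis
    using isCont_tendsto_compose[of 0 g "\<lambda>n. q^n"] q by (simp add: g_def LIMSEQ_power_zero)
qed

lemma first_term_eq_tail_0: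
  assumes q: "0 < q" "q < 1"
  shows "(1 + q) * q^3 / ((1 - q)^5 * (1 - q^3)^3) = tail q 0 + lambert_coeff q * lambert_term q 0"
proof -
  have "q^3 < 1"
    using q by (simp add: power_less_one_iff)
  then have nonzero: "1 - q \<noteq> 0" "1 - q^3 \<noteq> 0" "tail_denom q \<noteq> 0"
    using q tail_denom_pos[OF q] by auto
  obtain a b D where names: "a = 1 - q" "b = 1 - q^3" "D = tail_denom q"
    by blast
  have D: "D = (1-q)^3*(1-q^2)^3*(1-q^4)^3"
    unfolding names tail_denom_def ..
  have "a \<noteq> 0" "b \<noteq> 0" "D \<noteq> 0"
    using nonzero names by auto
  then have "(1 + q) * q^3 / (a^5 * b^3)
      = q * tail_poly q (q^2) / D / (a^3*b^3) + q^3*b*(1-q^5)*a/D * ((1+q)/a^2)"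
    by (simp add: field_simps) (unfold D names(1,2) tail_poly_def, algebra)
  then show ?thesis
    unfolding tail_def lambert_coeff_eq[OF nonzero(3)] lambert_term_def names by simp
qed

lemma gosper_pi_q_prefactor_eq:
  assumes q: "0 < q" "q < 1"
  shows "(gosper_pi_q q)^2 * (1 + q + q^2) * (1 + q + q^2 + q^3 + q^4) * q powr (5/2)
      / ((1 + q^2)^3 * (1 - q^2)^8)
    = lambert_coeff q * (qpoch_inf (q^2) (q^2)^4 / qpoch_inf q (q^2)^4)"
proof -
  let ?R = "qpoch_inf (q^2) (q^2)^4 / qpoch_inf q (q^2)^4"
  let ?F = "1 + q + q^2" and ?G = "1 + q + q^2 + q^3 + q^4"
  have "(q powr (1/4))^2 * q powr (5/2) = q powr (1/4 + 1/4 + 5/2)"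
    by (simp add: power2_eq_square flip: powr_add)
  also have "\<dots> = q^3"
    using q by simp
  finally have powr: "(q powr (1/4))^2 * q powr (5/2) = q^3" .
  have "(gosper_pi_q q)^2 = (1-q^2)^2 * (q powr (1/4))^2 * ?R"
    unfolding gosper_pi_q_def by (simp add: power_mult_distrib power_divide flip: power_mult)
  then have "(gosper_pi_q q)^2 * ?F * ?G * q powr (5/2) / ((1 + q^2)^3 * (1 - q^2)^8)
      = (1-q^2)^2 * ((q powr (1/4))^2 * q powr (5/2)) * (?F * ?G * ?R) / ((1 + q^2)^3 * (1 - q^2)^8)"
    by (simp add: ac_simps)
  also have "\<dots> = (1-q^2)^2 * q^3 * (?F * ?G * ?R) / ((1 + q^2)^3 * (1 - q^2)^8)"
    unfolding powr ..
  also have "\<dots> = lambert_coeff q * ?R"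
  proof -
    have cancel: "b^2 * y * (f * g * r) / (c * b^8) = y * f * g / (b^6 * c) * r"
      if "b \<noteq> 0" for b c y f g r :: real
      using that by (simp add: field_simps eval_nat_numeral)
    have "q^2 < 1"
      using q by (simp add: power_less_one_iff)
    then show ?thesis
      unfolding lambert_coeff_def by (intro cancel) simp
  qed
  finally show ?thesis .
qed

theorem mainTheorem17:
  fixes q :: real
  assumes "0 < q" and "q < 1"
  shows "(1 + q) * q^3 / ((1 - q)^5 * (1 - q^3)^3)
      - (\<Sum>n. (1 + q^(2*(n+1)+1)) * q^(7*(n+1)) /
           ((1 - q^(2*(n+1)-1))^3 * (1 - q^(2*(n+1)+1))^2 * (1 - q^(2*(n+1)+3))^3))
    = (gosper_pi_q q)^2 * (1 + q + q^2) * (1 + q + q^2 + q^3 + q^4) * q powr (5/2)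
      / ((1 + q^2)^3 * (1 - q^2)^8)"
proof -
  let ?S = "\<lambda>n. (1 + q^(2*(n+1)+1)) * q^(7*(n+1)) /
           ((1 - q^(2*(n+1)-1))^3 * (1 - q^(2*(n+1)+1))^2 * (1 - q^(2*(n+1)+3))^3)"
  let ?c = "lambert_coeff q"
  have "(\<lambda>n. ?S n + ?c * lambert_term q (Suc n)) sums (tail q 0 - 0)"
    unfolding summand_eq_tail_diff[OF assms] by (rule telescope_sums'[OF tail_tendsto_0[OF assms]])
  moreover have "(\<lambda>n. ?c * lambert_term q (Suc n)) sums (?c * ((\<Sum>k. lambert_term q k) - lambert_term q 0))"
    using summable_lambert_term[OF assms] by (intro sums_mult) (simp add: sums_Suc_iff summable_sums)
  ultimately have "?S sums (tail q 0 - ?c * ((\<Sum>k. lambert_term q k) - lambert_term q 0))"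
    using sums_diff by fastforce
  then show ?thesis
    unfolding sums_iff first_term_eq_tail_0[OF assms] gosper_pi_q_prefactor_eq[OF assms]
      suminf_lambert_term[OF assms, symmetric]
    by (simp add: algebra_simps)
qed

end
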